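(* If a square matrix $A$ has a principal submatrix $A[\kappa]$ that is a Hurwitz-unstable $P^-_{FF}$ matrix, then $A$ is $D$-Hopf.
   Context: Hurwitz-unstable: at least one eigenvalue with positive real part. $P^-_0$ matrix: every nonzero $k\times k$ principal minor has sign $(-1)^k$. An $n\times n$ $P^-_0$ matrix $A$ is a $P^-_{FF}$ (Fisher–Fuller) matrix if there is a nested sequence of invertible principal submatrices $A[\kappa_1],\dots,A[\kappa_n]$ with $|\kappa_i|=i$ and $\kappa_{i-1}\subset\kappa_i$. Inertia: numbers of eigenvalues with negative, positive, zero real part. $A$ is $D$-Hopf if there exist an invertible $k\times k$ principal submatrix $A[\kappa]$ and positive diagonal $D_1,D_2$ with $\operatorname{inertia}(A[\kappa]D_1)\ne\operatorname{inertia}(A[\kappa]D_2)$. *)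

theory Defs
  imports "Jordan_Normal_Form.DL_Submatrix" "Jordan_Normal_Form.Char_Poly"
    "HOL-Computational_Algebra.Polynomial"
begin

text \<open>Real square matrices are Jordan_Normal_Form matrices of type real mat;
  indices are 0-based.\<close>

definition principal_sub :: "real mat \<Rightarrow> nat set \<Rightarrow> real mat" where
  "principal_sub A \<kappa> = submatrix A \<kappa> \<kappa>"

definition eigs :: "real mat \<Rightarrow> complex multiset" where
  "eigs M = proots (char_poly (map_mat complex_of_real M))"

definition inertia :: "real mat \<Rightarrow> nat \<times> nat \<times> nat" where
  "inertia M = (size (filter_mset (\<lambda>z. Re z < 0) (eigs M)),
                size (filter_mset (\<lambda>z. Re z > 0) (eigs M)),
                size (filter_mset (\<lambda>z. Re z = 0) (eigs M)))"

definition hurwitz_unstable :: "real mat \<Rightarrow> bool" where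
  "hurwitz_unstable M \<longleftrightarrow> (\<exists>z. eigenvalue (map_mat complex_of_real M) z \<and> Re z > 0)"

definition P0_minus :: "real mat \<Rightarrow> bool" where
  "P0_minus M \<longleftrightarrow> square_mat M \<and>
     (\<forall>\<alpha>. \<alpha> \<subseteq> {0..<dim_row M} \<longrightarrow> \<alpha> \<noteq> {} \<longrightarrow>
        det (principal_sub M \<alpha>) \<noteq> 0 \<longrightarrow>
        sgn (det (principal_sub M \<alpha>)) = (-1) ^ card \<alpha>)"

definition P_FF_minus :: "real mat \<Rightarrow> bool" where
  "P_FF_minus M \<longleftrightarrow> P0_minus M \<and>
     (\<exists>c :: nat \<Rightarrow> nat set.
        (\<forall>i\<in>{1..dim_row M}. c i \<subseteq> {0..<dim_row M} \<and> card (c i) = i \<and>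
                               det (principal_sub M (c i)) \<noteq> 0) \<and>
        (\<forall>i\<in>{2..dim_row M}. c (i - 1) \<subseteq> c i))"

definition pos_diag :: "nat \<Rightarrow> real mat \<Rightarrow> bool" where
  "pos_diag k D \<longleftrightarrow> D \<in> carrier_mat k k \<and> diagonal_mat D \<and> (\<forall>i<k. D $$ (i, i) > 0)"

definition D_Hopf :: "real mat \<Rightarrow> bool" where
  "D_Hopf A \<longleftrightarrow> (\<exists>\<kappa> D1 D2. \<kappa> \<subseteq> {0..<dim_row A} \<and> \<kappa> \<noteq> {} \<and>
      det (principal_sub A \<kappa>) \<noteq> 0 \<and>
      pos_diag (card \<kappa>) D1 \<and> pos_diag (card \<kappa>) D2 \<and>
      inertia (principal_sub A \<kappa> * D1) \<noteq> inertia (principal_sub A \<kappa> * D2))"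

end

theory Submission
  imports Defs
begin

(* Take kappa itself with D1 = I: then A[kappa] D1 has an eigenvalue with positive real part,
   so it suffices to find a positive diagonal D2 making B D2 Hurwitz stable, where B = A[kappa]
   (Fisher and Fuller). Renumbering the indices along the nested chain of the P-_FF condition
   turns the chain minors into leading principal minors, nonzero with signs (-1)^k; hence
   B = L U with L unit lower triangular and U upper triangular with negative diagonal. For
   D = diag(1, e^2, e^4, ...) the matrix L U D is similar to U D L and, after conjugation by
   diag(e^i), to a matrix whose i-th row is e^(2i) U_ii times the i-th unit row plus
   O(e^(2i+1)). For small e Gershgorin's theorem puts every eigenvalue into the open left
   half-plane, so the inertias of B D1 and B D2 differ in their number of eigenvalues with
   positive real part. *)

section \<open>Reindexing principal submatrices\<close>

lemma permutes_lessThan_less: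
  fixes i n :: nat
  assumes "p permutes {0..<n}" and "i < n"
  shows "p i < n"
  using assms permutes_in_image[of p "{0..<n}" i] by auto

lemma det_permute_rows_cols:
  fixes A :: "'a::comm_ring_1 mat"
  assumes A: "A \<in> carrier_mat n n" and p: "p permutes {0..<n}"
  shows "det (mat n n (\<lambda>(i,j). A $$ (p i, p j))) = det A"
proof -
  have p_less: "\<And>i. i < n \<Longrightarrow> p i < n" using permutes_lessThan_less[OF p] .
  define A' where "A' = mat n n (\<lambda>(i,j). A $$ (i, p j))"
  have A': "A' \<in> carrier_mat n n" by (simp add: A'_def)
  have rows: "mat n n (\<lambda>(i,j). A $$ (p i, p j)) = mat n n (\<lambda>(i,j). A' $$ (p i, j))"
    by (rule eq_matI) (auto simp: A'_def p_less)
  have cols: "transpose_mat A' = mat n n (\<lambda>(i,j). transpose_mat A $$ (p i, j))"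
    by (rule eq_matI, insert A, auto simp: A'_def p_less)
  have "det A' = det (transpose_mat A')" using det_transpose[OF A'] by simp
  also have "\<dots> = signof p * det (transpose_mat A)"
    unfolding cols by (rule det_permute_rows[OF _ p]) (use A in simp)
  also have "\<dots> = signof p * det A" using det_transpose[OF A] by simp
  finally have "det A' = signof p * det A" .
  then show ?thesis
    using det_permute_rows[OF A' p] by (simp add: rows mult.assoc[symmetric] sign_def)
qed

lemma char_poly_permute_rows_cols:
  fixes A :: "'a::comm_ring_1 mat"
  assumes A: "A \<in> carrier_mat n n" and p: "p permutes {0..<n}"
  shows "char_poly (mat n n (\<lambda>(i,j). A $$ (p i, p j))) = char_poly A"
proof -
  have p_eq: "p i = p j \<longleftrightarrow> i = j" for i j
    using permutes_inj[OF p] by (auto dest: injD)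
  have CA: "char_poly_matrix A \<in> carrier_mat n n" using A by simp
  have "char_poly_matrix (mat n n (\<lambda>(i,j). A $$ (p i, p j)))
      = mat n n (\<lambda>(i,j). char_poly_matrix A $$ (p i, p j))"
    by (rule eq_matI) (use A in \<open>auto simp: char_poly_matrix_def p_eq permutes_lessThan_less[OF p]\<close>)
  then show ?thesis
    unfolding char_poly_def by (simp only: det_permute_rows_cols[OF CA p])
qed

lemma det_reindex_bij:
  fixes F :: "nat \<Rightarrow> nat \<Rightarrow> 'a::comm_ring_1"
  assumes f: "bij_betw f {0..<k} S" and g: "bij_betw g {0..<k} S"
  shows "det (mat k k (\<lambda>(i,j). F (f i) (f j))) = det (mat k k (\<lambda>(i,j). F (g i) (g j)))"
proof -
  define p where "p i = (if i < k then inv_into {0..<k} f (g i) else i)" for i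
  have "bij_betw (inv_into {0..<k} f \<circ> g) {0..<k} {0..<k}"
    using bij_betw_trans[OF g bij_betw_inv_into[OF f]] .
  then have "bij_betw p {0..<k} {0..<k}"
    by (rule bij_betw_cong[THEN iffD1, rotated]) (auto simp: p_def)
  then have p: "p permutes {0..<k}"
    by (rule bij_imp_permutes) (auto simp: p_def)
  have fp: "f (p i) = g i" if "i < k" for i
  proof -
    have "g i \<in> f ` {0..<k}" using that f g by (auto simp: bij_betw_def)
    then show ?thesis using that by (simp add: p_def f_inv_into_f)
  qed
  have "mat k k (\<lambda>(i,j). F (g i) (g j))
      = mat k k (\<lambda>(i,j). mat k k (\<lambda>(i,j). F (f i) (f j)) $$ (p i, p j))"
    by (rule eq_matI) (auto simp: permutes_lessThan_less[OF p] fp)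
  then show ?thesis
    using det_permute_rows_cols[of "mat k k (\<lambda>(i,j). F (f i) (f j))" k p] p by simp
qed

lemma bij_betw_pick: "finite S \<Longrightarrow> bij_betw (pick S) {0..<card S} S"
proof -
  assume S: "finite S"
  have "strict_mono_on {0..<card S} (pick S)"
    by (auto intro!: strict_mono_onI pick_mono)
  then have inj: "inj_on (pick S) {0..<card S}"
    by (rule strict_mono_on_imp_inj_on)
  moreover have "pick S ` {0..<card S} \<subseteq> S"
    by (auto intro: pick_in_set)
  moreover have "card (pick S ` {0..<card S}) = card S"
    by (simp add: card_image[OF inj])
  ultimately show ?thesis
    using card_subset_eq[OF S] by (auto simp: bij_betw_def)
qed

lemma principal_sub_pick:
  assumes B: "B \<in> carrier_mat m m" and S: "S \<subseteq> {0..<m}"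
  shows "principal_sub B S = mat (card S) (card S) (\<lambda>(i,j). B $$ (pick S i, pick S j))"
proof -
  have "{i. i < m \<and> i \<in> S} = S" using S by auto
  then show ?thesis using B by (simp add: principal_sub_def submatrix_def)
qed

lemma principal_sub_full:
  assumes B: "B \<in> carrier_mat m m"
  shows "principal_sub B {0..<m} = B"
proof -
  have "pick {0..<m} i = i" if "i < m" for i
  proof -
    have "{a \<in> {0..<m}. a < i} = {0..<i}" using that by auto
    then show ?thesis using pick_card_in_set[of i "{0..<m}"] that by simp
  qed
  then show ?thesis
    by (intro eq_matI) (use B in \<open>auto simp: principal_sub_pick[OF B]\<close>)
qed

lemma nested_chain_permutation:
  assumes c: "\<And>k. k \<in> {1..m} \<Longrightarrow> c k \<subseteq> {0..<m} \<and> card (c k) = k"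
    and nested: "\<And>k. k \<in> {2..m} \<Longrightarrow> c (k - 1) \<subseteq> c k"
  shows "\<exists>p. p permutes {0..<m} \<and> (\<forall>k\<in>{1..m}. bij_betw p {0..<k} (c k))"
proof -
  define C where "C k = (if k = 0 then {} else c k)" for k
  have C_sub: "C k \<subseteq> {0..<m}" and C_card: "card (C k) = k" if "k \<le> m" for k
    using c that by (auto simp: C_def)
  have C_fin: "finite (C k)" if "k \<le> m" for k
    using C_sub[OF that] finite_subset by blast
  have C_step: "\<exists>x. x \<notin> C k \<and> C (Suc k) = insert x (C k)" if k: "k < m" for k
  proof -
    have sub: "C k \<subseteq> C (Suc k)"
      using nested[of "Suc k"] k by (auto simp: C_def)
    then have "card (C (Suc k) - C k) = 1"
      using C_fin C_card k by (simp add: card_Diff_subset)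
    then obtain x where "C (Suc k) - C k = {x}"
      by (metis One_nat_def card_1_singleton_iff)
    then show ?thesis using sub by auto
  qed
  obtain q where q: "\<And>k. k < m \<Longrightarrow> q k \<notin> C k \<and> C (Suc k) = insert (q k) (C k)"
    using C_step by metis
  have q_image: "q ` {0..<k} = C k" if "k \<le> m" for k
    using that
  proof (induction k)
    case 0
    then show ?case by (simp add: C_def)
  next
    case (Suc k)
    then show ?case using q[of k] by (simp add: atLeast0_lessThan_Suc)
  qed
  define p where "p i = (if i < m then q i else i)" for i
  have p_bij: "bij_betw p {0..<k} (C k)" if k: "k \<le> m" for k
  proof -
    have "inj_on q {0..<k}"
      by (rule eq_card_imp_inj_on) (simp_all add: q_image C_card k)
    then have "bij_betw q {0..<k} (C k)"
      using q_image[OF k] by (simp add: bij_betw_def)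
    then show ?thesis
      by (rule bij_betw_cong[THEN iffD1, rotated]) (use k in \<open>auto simp: p_def\<close>)
  qed
  have "C m = {0..<m}"
    using card_subset_eq[of "{0..<m}" "C m"] C_sub C_card by simp
  then have "p permutes {0..<m}"
    using p_bij[of m] by (intro bij_imp_permutes) (auto simp: p_def)
  moreover have "bij_betw p {0..<k} (c k)" if "k \<in> {1..m}" for k
    using p_bij[of k] that by (simp add: C_def)
  ultimately show ?thesis by blast
qed

section \<open>Triangular factorization\<close>

definition leading_sub :: "'a mat \<Rightarrow> nat \<Rightarrow> 'a mat" where
  "leading_sub A k = mat k k (\<lambda>(i,j). A $$ (i,j))"

definition unit_lower_triangular :: "nat \<Rightarrow> 'a::{zero,one} mat \<Rightarrow> bool" where
  "unit_lower_triangular n L \<longleftrightarrow> L \<in> carrier_mat n n \<and> (\<forall>i<n. L $$ (i,i) = 1) \<and>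
     (\<forall>i j. i < j \<longrightarrow> j < n \<longrightarrow> L $$ (i,j) = 0)"

lemma det_unit_lower_triangular:
  fixes L :: "'a::comm_ring_1 mat"
  assumes "unit_lower_triangular n L"
  shows "det L = 1"
proof -
  have L: "L \<in> carrier_mat n n" and diag: "\<forall>i<n. L $$ (i,i) = 1"
    and lower: "\<And>i j. i < j \<Longrightarrow> j < n \<Longrightarrow> L $$ (i,j) = 0"
    using assms by (auto simp: unit_lower_triangular_def)
  have "det L = (\<Prod>i = 0..<n. L $$ (i,i))"
    using det_lower_triangular[OF lower L] L by (simp add: prod_list_diag_prod)
  also have "\<dots> = 1" using diag by simp
  finally show ?thesis .
qed

lemma unit_lower_triangular_mult_index:
  fixes M B :: "'a::comm_semiring_1 mat"
  assumes M: "unit_lower_triangular n M" and B: "B \<in> carrier_mat n m"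
    and i: "i < n" and j: "j < m"
  shows "(M * B) $$ (i,j) = B $$ (i,j) + (\<Sum>l<i. M $$ (i,l) * B $$ (l,j))"
proof -
  have split: "{0..<n} = insert i ({..<i} \<union> {i<..<n})" using i by auto
  have "(\<Sum>l\<in>{i<..<n}. M $$ (i,l) * B $$ (l,j)) = 0"
    using M by (intro sum.neutral) (auto simp: unit_lower_triangular_def)
  moreover have "(\<Sum>l\<in>{..<i} \<union> {i<..<n}. M $$ (i,l) * B $$ (l,j))
      = (\<Sum>l<i. M $$ (i,l) * B $$ (l,j)) + (\<Sum>l\<in>{i<..<n}. M $$ (i,l) * B $$ (l,j))"
    by (rule sum.union_disjoint) auto
  ultimately have "(\<Sum>l\<in>{0..<n}. M $$ (i,l) * B $$ (l,j))
      = M $$ (i,i) * B $$ (i,j) + (\<Sum>l<i. M $$ (i,l) * B $$ (l,j))"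
    by (simp add: split)
  moreover have "M \<in> carrier_mat n n" "M $$ (i,i) = 1"
    using M i by (simp_all add: unit_lower_triangular_def)
  ultimately show ?thesis
    using B i j by (simp add: scalar_prod_def)
qed

lemma unit_lower_triangular_leading_sub:
  "unit_lower_triangular n L \<Longrightarrow> k \<le> n \<Longrightarrow> unit_lower_triangular k (leading_sub L k)"
  by (auto simp: unit_lower_triangular_def leading_sub_def)

lemma upper_triangular_leading_sub:
  "upper_triangular U \<Longrightarrow> U \<in> carrier_mat n n \<Longrightarrow> k \<le> n \<Longrightarrow> upper_triangular (leading_sub U k)"
  by (auto simp: upper_triangular_def leading_sub_def)

lemma leading_sub_mult_lower:
  fixes L B :: "'a::comm_semiring_1 mat"
  assumes L: "L \<in> carrier_mat n n" and B: "B \<in> carrier_mat n n"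
    and lower: "\<And>i j. i < j \<Longrightarrow> j < n \<Longrightarrow> L $$ (i,j) = 0" and k: "k \<le> n"
  shows "leading_sub (L * B) k = leading_sub L k * leading_sub B k"
proof (rule eq_matI)
  fix i j assume "i < dim_row (leading_sub L k * leading_sub B k)"
    and "j < dim_col (leading_sub L k * leading_sub B k)"
  then have i: "i < k" and j: "j < k" by (auto simp: leading_sub_def)
  have split: "{0..<n} = {0..<k} \<union> {k..<n}" using k by auto
  have "(\<Sum>l\<in>{k..<n}. L $$ (i,l) * B $$ (l,j)) = 0"
    using lower i by (intro sum.neutral) auto
  then have "(\<Sum>l\<in>{0..<n}. L $$ (i,l) * B $$ (l,j)) = (\<Sum>l\<in>{0..<k}. L $$ (i,l) * B $$ (l,j))"
    by (simp add: split sum.union_disjoint)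
  then show "leading_sub (L * B) k $$ (i,j) = (leading_sub L k * leading_sub B k) $$ (i,j)"
    using L B i j k by (simp add: leading_sub_def scalar_prod_def)
qed (auto simp: leading_sub_def)

lemma det_leading_sub_LU:
  fixes L U :: "'a::comm_ring_1 mat"
  assumes L: "unit_lower_triangular n L" and U: "U \<in> carrier_mat n n" "upper_triangular U"
    and k: "k \<le> n"
  shows "det (leading_sub (L * U) k) = (\<Prod>i<k. U $$ (i,i))"
proof -
  have "leading_sub (L * U) k = leading_sub L k * leading_sub U k"
    using L U k by (intro leading_sub_mult_lower) (auto simp: unit_lower_triangular_def)
  then have "det (leading_sub (L * U) k) = det (leading_sub L k) * det (leading_sub U k)"
    by (simp add: det_mult[of _ k] leading_sub_def)
  also have "det (leading_sub L k) = 1"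
    using det_unit_lower_triangular unit_lower_triangular_leading_sub[OF L k] by blast
  also have "det (leading_sub U k) = (\<Prod>i<k. U $$ (i,i))"
    using det_upper_triangular[OF upper_triangular_leading_sub[OF U(2,1) k], of k] k
    by (simp add: leading_sub_def prod_list_diag_prod atLeast0LessThan)
  finally show ?thesis by simp
qed

lemma LU_diag_neg:
  fixes L U :: "'a::linordered_idom mat"
  assumes L: "unit_lower_triangular n L" and U: "U \<in> carrier_mat n n" "upper_triangular U"
    and sign: "\<And>k. k \<in> {1..n} \<Longrightarrow> sgn (det (leading_sub (L * U) k)) = (-1) ^ k"
    and i: "i < n"
  shows "U $$ (i,i) < 0"
proof -
  have sgn_prod: "sgn (\<Prod>j<k. U $$ (j,j)) = (-1) ^ k" if "k \<le> n" for k
    using sign[of k] det_leading_sub_LU[OF L U that] that by (cases "k = 0") auto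
  have "(-1) ^ Suc i = sgn (\<Prod>j<i. U $$ (j,j)) * sgn (U $$ (i,i))"
    using sgn_prod[of "Suc i"] i by (simp add: sgn_mult)
  then have "(-1) ^ i * sgn (U $$ (i,i)) = (-1) ^ i * -1"
    using sgn_prod[of i] i by simp
  then have "sgn (U $$ (i,i)) = -1"
    by (simp only: mult_cancel_left) simp
  then show ?thesis using sgn_less[of "U $$ (i,i)"] by simp
qed

lemma det_nonzero_inverse:
  fixes A :: "'a::field mat"
  assumes A: "A \<in> carrier_mat n n" and d: "det A \<noteq> 0"
  obtains B where "B \<in> carrier_mat n n" "A * B = 1\<^sub>m n" "B * A = 1\<^sub>m n"
  using det_non_zero_imp_unit[OF A d, of "()"] unfolding Units_def
  by (auto simp: ring_mat_simps)

lemma elimination_row_exists: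
  fixes B :: "'a::field mat"
  assumes B: "B \<in> carrier_mat n n" and k: "k < n" and d: "det (leading_sub B k) \<noteq> 0"
  shows "\<exists>a. \<forall>j<k. (\<Sum>i<k. a i * B $$ (i,j)) = - B $$ (k,j)"
proof -
  define T where "T = transpose_mat (leading_sub B k)"
  have T: "T \<in> carrier_mat k k" by (simp add: T_def leading_sub_def)
  have "det T \<noteq> 0"
    using d det_transpose[of "leading_sub B k" k] by (simp add: T_def leading_sub_def)
  then obtain T' where T': "T' \<in> carrier_mat k k" "T * T' = 1\<^sub>m k"
    by (rule det_nonzero_inverse[OF T])
  define b where "b = vec k (\<lambda>j. - B $$ (k,j))"
  have b: "b \<in> carrier_vec k" by (simp add: b_def)
  have "T *\<^sub>v (T' *\<^sub>v b) = b"
    using assoc_mult_mat_vec[OF T T'(1) b, symmetric] T'(2) b by simp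
  then have "(\<Sum>i<k. (T' *\<^sub>v b) $ i * B $$ (i,j)) = - B $$ (k,j)" if "j < k" for j
    using that T' b k B
    by (auto simp: T_def leading_sub_def scalar_prod_def b_def atLeast0LessThan mult.commute
        dest!: arg_cong[where f = "\<lambda>v. v $ j"])
  then show ?thesis by blast
qed

lemma elimination_unit_lower_triangular:
  fixes B :: "'a::field mat"
  assumes B: "B \<in> carrier_mat n n" and minors: "\<And>k. k \<in> {1..n} \<Longrightarrow> det (leading_sub B k) \<noteq> 0"
  shows "\<exists>M. unit_lower_triangular n M \<and> upper_triangular (M * B)"
proof -
  have "\<exists>a. k < n \<longrightarrow> (\<forall>j<k. (\<Sum>i<k. a i * B $$ (i,j)) = - B $$ (k,j))" for k
    using elimination_row_exists[OF B, of k] minors[of k] by (cases "k = 0") auto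
  then obtain a where a: "\<And>k j. k < n \<Longrightarrow> j < k \<Longrightarrow> (\<Sum>i<k. a k i * B $$ (i,j)) = - B $$ (k,j)"
    by metis
  define M where "M = mat n n (\<lambda>(i,j). if i = j then 1 else if j < i then a i j else 0)"
  have M: "unit_lower_triangular n M" by (simp add: unit_lower_triangular_def M_def)
  have "(M * B) $$ (i,j) = 0" if ji: "j < i" and i: "i < n" for i j
    using unit_lower_triangular_mult_index[OF M B i] a[OF i ji] ji i
    by (simp add: M_def)
  then show ?thesis
    using M B by (intro exI[of _ M]) (auto simp: M_def)
qed

lemma unit_lower_triangular_inverse:
  fixes M :: "'a::field mat"
  assumes M: "unit_lower_triangular n M"
  obtains L where "unit_lower_triangular n L" "M * L = 1\<^sub>m n" "L * M = 1\<^sub>m n"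
proof -
  have Mc: "M \<in> carrier_mat n n" using M by (simp add: unit_lower_triangular_def)
  obtain L where L: "L \<in> carrier_mat n n" "M * L = 1\<^sub>m n" "L * M = 1\<^sub>m n"
    using det_nonzero_inverse[OF Mc] det_unit_lower_triangular[OF M] by auto
  have row: "L $$ (i,j) + (\<Sum>l<i. M $$ (i,l) * L $$ (l,j)) = (if i = j then 1 else 0)"
    if "i < n" "j < n" for i j
    using unit_lower_triangular_mult_index[OF M L(1) that] L(2) that by simp
  have lower: "\<forall>j. i < j \<longrightarrow> j < n \<longrightarrow> L $$ (i,j) = 0" for i
  proof (induction i rule: less_induct)
    case (less i)
    show ?case
    proof (intro allI impI)
      fix j assume ij: "i < j" "j < n"
      have "(\<Sum>l<i. M $$ (i,l) * L $$ (l,j)) = 0"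
        using less ij by (intro sum.neutral) auto
      then show "L $$ (i,j) = 0" using row[of i j] ij by simp
    qed
  qed
  have "L $$ (j,j) = 1" if "j < n" for j
  proof -
    have "(\<Sum>l<j. M $$ (j,l) * L $$ (l,j)) = 0"
      using lower that by (intro sum.neutral) auto
    then show ?thesis using row[of j j] that by simp
  qed
  then have "unit_lower_triangular n L"
    using L(1) lower by (simp add: unit_lower_triangular_def)
  then show ?thesis using L that by blast
qed

lemma LU_factorization:
  fixes B :: "'a::field mat"
  assumes B: "B \<in> carrier_mat n n" and minors: "\<And>k. k \<in> {1..n} \<Longrightarrow> det (leading_sub B k) \<noteq> 0"
  obtains L U where "unit_lower_triangular n L" "U \<in> carrier_mat n n" "upper_triangular U"
    "B = L * U"
proof -
  obtain M where M: "unit_lower_triangular n M" "upper_triangular (M * B)"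
    using elimination_unit_lower_triangular[OF B minors] by blast
  obtain L where L: "unit_lower_triangular n L" "L * M = 1\<^sub>m n"
    using unit_lower_triangular_inverse[OF M(1)] by blast
  have carr: "L \<in> carrier_mat n n" "M \<in> carrier_mat n n"
    using L M by (auto simp: unit_lower_triangular_def)
  have "L * (M * B) = B"
    using carr B L(2) by (simp flip: assoc_mult_mat[of L n n M n B n])
  then show ?thesis
    using that[OF L(1) _ M(2)] carr B by simp
qed

section \<open>Gershgorin discs and similarity\<close>

lemma gershgorin_disc:
  fixes Y :: "'a::real_normed_field mat"
  assumes Y: "Y \<in> carrier_mat n n" and ev: "eigenvalue Y l"
  shows "\<exists>i<n. norm (l - Y $$ (i,i)) \<le> (\<Sum>j\<in>{0..<n}-{i}. norm (Y $$ (i,j)))"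
proof -
  obtain v where v: "v \<in> carrier_vec n" "v \<noteq> 0\<^sub>v n" "Y *\<^sub>v v = l \<cdot>\<^sub>v v"
    using ev Y unfolding eigenvalue_def eigenvector_def by auto
  obtain j0 where j0: "j0 < n" "v $ j0 \<noteq> 0"
    using v(1,2) by (metis eq_vecI carrier_vecD index_zero_vec)
  define vmax where "vmax = Max ((\<lambda>j. norm (v $ j)) ` {0..<n})"
  have "vmax \<in> (\<lambda>j. norm (v $ j)) ` {0..<n}"
    unfolding vmax_def using j0 by (intro Max_in) auto
  then obtain i where i: "i < n" "norm (v $ i) = vmax" by auto
  have le_max: "norm (v $ j) \<le> norm (v $ i)" if "j < n" for j
    unfolding i vmax_def using that by (intro Max_ge) auto
  have vi_pos: "norm (v $ i) > 0"
    using le_max[OF j0(1)] j0(2) by (metis zero_less_norm_iff order_less_le_trans)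
  have "l * v $ i = (Y *\<^sub>v v) $ i"
    using v i by simp
  also have "\<dots> = (\<Sum>j\<in>{0..<n}. Y $$ (i,j) * v $ j)"
    using Y v(1) i by (simp add: scalar_prod_def)
  also have "\<dots> = Y $$ (i,i) * v $ i + (\<Sum>j\<in>{0..<n}-{i}. Y $$ (i,j) * v $ j)"
    using i by (subst sum.remove[of _ i]) auto
  finally have "(l - Y $$ (i,i)) * v $ i = (\<Sum>j\<in>{0..<n}-{i}. Y $$ (i,j) * v $ j)"
    by (simp add: algebra_simps)
  then have "norm (l - Y $$ (i,i)) * norm (v $ i) = norm (\<Sum>j\<in>{0..<n}-{i}. Y $$ (i,j) * v $ j)"
    by (metis norm_mult)
  also have "\<dots> \<le> (\<Sum>j\<in>{0..<n}-{i}. norm (Y $$ (i,j)) * norm (v $ j))"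
    by (rule order_trans[OF norm_sum]) (simp add: norm_mult)
  also have "\<dots> \<le> (\<Sum>j\<in>{0..<n}-{i}. norm (Y $$ (i,j)) * norm (v $ i))"
    using le_max by (intro sum_mono mult_left_mono) auto
  finally show ?thesis
    using i vi_pos by (auto simp: sum_distrib_right[symmetric])
qed

definition hurwitz_stable :: "real mat \<Rightarrow> bool" where
  "hurwitz_stable M \<longleftrightarrow> (\<forall>z. eigenvalue (map_mat complex_of_real M) z \<longrightarrow> Re z < 0)"

lemma hurwitz_stable_if_diag_dominant:
  fixes Y :: "real mat"
  assumes Y: "Y \<in> carrier_mat n n"
    and dominant: "\<And>i. i < n \<Longrightarrow> Y $$ (i,i) + (\<Sum>j\<in>{0..<n}-{i}. \<bar>Y $$ (i,j)\<bar>) < 0"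
  shows "hurwitz_stable Y"
  unfolding hurwitz_stable_def
proof (intro allI impI)
  fix l assume "eigenvalue (map_mat complex_of_real Y) l"
  then obtain i where i: "i < n" and disc:
    "cmod (l - of_real (Y $$ (i,i))) \<le> (\<Sum>j\<in>{0..<n}-{i}. cmod (of_real (Y $$ (i,j))))"
    using gershgorin_disc[of "map_mat complex_of_real Y" n l] Y by auto
  have "Re l = Y $$ (i,i) + Re (l - of_real (Y $$ (i,i)))" by simp
  also have "\<dots> \<le> Y $$ (i,i) + cmod (l - of_real (Y $$ (i,i)))"
    by (rule add_left_mono[OF complex_Re_le_cmod])
  also have "\<dots> \<le> Y $$ (i,i) + (\<Sum>j\<in>{0..<n}-{i}. \<bar>Y $$ (i,j)\<bar>)"
    using disc by simp
  also have "\<dots> < 0" using dominant[OF i] .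
  finally show "Re l < 0" .
qed

lemma hurwitz_stable_char_poly_eq:
  fixes A B :: "real mat"
  assumes A: "A \<in> carrier_mat n n" and B: "B \<in> carrier_mat n n"
    and cp: "char_poly A = char_poly B"
  shows "hurwitz_stable A \<longleftrightarrow> hurwitz_stable B"
proof -
  have "eigenvalue (map_mat complex_of_real A) l \<longleftrightarrow> eigenvalue (map_mat complex_of_real B) l" for l
    using A B cp
    by (simp add: eigenvalue_root_char_poly[of _ n] of_real_hom.char_poly_hom[of _ n])
  then show ?thesis by (simp add: hurwitz_stable_def)
qed

lemma similar_mat_mult_commute:
  fixes L X :: "'a::comm_ring_1 mat"
  assumes L: "L \<in> carrier_mat n n" and X: "X \<in> carrier_mat n n"
    and M: "M \<in> carrier_mat n n" "L * M = 1\<^sub>m n" "M * L = 1\<^sub>m n"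
  shows "similar_mat (L * X) (X * L)"
proof -
  have LX: "L * X \<in> carrier_mat n n" using L X by simp
  have "L * (X * L) * M = L * X * L * M"
    using L X by (simp add: assoc_mult_mat[of L n n X n L n])
  also have "\<dots> = L * X * (L * M)"
    by (rule assoc_mult_mat[of "L * X" n n L n M n]) (simp_all add: LX L M)
  also have "\<dots> = L * X"
    using L X M by simp
  finally have "L * X = L * (X * L) * M" ..
  then have "similar_mat_wit (L * X) (X * L) L M"
    using L X M by (intro similar_mat_witI[of L M n]) auto
  then show ?thesis
    unfolding similar_mat_def by blast
qed

lemma similar_mat_diag_scaling:
  fixes A :: "'a::field mat"
  assumes A: "A \<in> carrier_mat n n" and s: "\<And>i. i < n \<Longrightarrow> s i \<noteq> 0"
  shows "similar_mat A (mat n n (\<lambda>(i,j). s i * A $$ (i,j) / s j))"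
proof -
  let ?Y = "mat n n (\<lambda>(i,j). s i * A $$ (i,j) / s j)"
  let ?P = "mat_diag n (\<lambda>i. 1 / s i)" and ?Q = "mat_diag n s"
  have "?P * ?Q = mat_diag n (\<lambda>i. 1 / s i * s i)" "?Q * ?P = mat_diag n (\<lambda>i. s i * (1 / s i))"
    by simp_all
  then have PQ: "?P * ?Q = 1\<^sub>m n" "?Q * ?P = 1\<^sub>m n"
    using s by (auto intro!: eq_matI simp: mat_diag_def)
  have "?P * ?Y = mat n n (\<lambda>(i,j). A $$ (i,j) / s j)"
    by (subst mat_diag_mult_left[of ?Y n n]) (simp, rule eq_matI, use s in auto)
  then have "?P * ?Y * ?Q = A"
    by (subst mat_diag_mult_right[of _ n n]) (simp, rule eq_matI, use A s in auto)
  then have "A = ?P * ?Y * ?Q" ..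
  then have "similar_mat_wit A ?Y ?P ?Q"
    using A PQ by (intro similar_mat_witI[of ?P ?Q n]) auto
  then show ?thesis
    unfolding similar_mat_def by blast
qed

section \<open>Diagonal scaling of a triangular factorization\<close>

definition rescaled_UDL :: "nat \<Rightarrow> real mat \<Rightarrow> real mat \<Rightarrow> real \<Rightarrow> real mat" where
  "rescaled_UDL n U L e =
     mat n n (\<lambda>(i,j). e ^ i * (U * mat_diag n (\<lambda>k. e ^ (2 * k)) * L) $$ (i,j) / e ^ j)"

lemma similar_rescaled_UDL:
  fixes L U :: "real mat"
  assumes L: "unit_lower_triangular n L" and U: "U \<in> carrier_mat n n" and e: "e > 0"
  shows "similar_mat (L * U * mat_diag n (\<lambda>k. e ^ (2 * k))) (rescaled_UDL n U L e)"
proof -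
  let ?D = "mat_diag n (\<lambda>k. e ^ (2 * k))"
  have Lc: "L \<in> carrier_mat n n" using L by (simp add: unit_lower_triangular_def)
  obtain M where M: "M \<in> carrier_mat n n" "L * M = 1\<^sub>m n" "M * L = 1\<^sub>m n"
    using det_nonzero_inverse[OF Lc] det_unit_lower_triangular[OF L] by auto
  have UD: "U * ?D \<in> carrier_mat n n" using U by simp
  have "similar_mat (L * U * ?D) (U * ?D * L)"
    using similar_mat_mult_commute[OF Lc UD M] Lc U by (simp add: assoc_mult_mat[of L n n U n ?D n])
  moreover have "similar_mat (U * ?D * L) (rescaled_UDL n U L e)"
    unfolding rescaled_UDL_def using UD Lc e by (intro similar_mat_diag_scaling) auto
  ultimately show ?thesis by (rule similar_mat_trans)
qed

lemma rescaled_UDL_entry_bound: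
  fixes L U :: "real mat"
  assumes L: "unit_lower_triangular n L" and U: "U \<in> carrier_mat n n" "upper_triangular U"
    and e: "0 < e" "e \<le> 1" and i: "i < n" and j: "j < n"
  shows "\<bar>rescaled_UDL n U L e $$ (i,j) - (if i = j then U $$ (i,i) * e ^ (2 * i) else 0)\<bar>
         \<le> (\<Sum>k<n. \<bar>U $$ (i,k) * L $$ (k,j)\<bar>) * e ^ (2 * i + 1)"
proof -
  have Lc: "L \<in> carrier_mat n n" and L_diag: "L $$ (i,i) = 1"
    and L_lower: "\<And>k. k < j \<Longrightarrow> L $$ (k,j) = 0"
    using L i j by (auto simp: unit_lower_triangular_def)
  define t where "t k = U $$ (i,k) * L $$ (k,j) * (e ^ (2 * k) * e ^ i / e ^ j)" for k
  define r where "r k = t k - (if k = i \<and> j = i then U $$ (i,i) * e ^ (2 * i) else 0)" for k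
  have "U * mat_diag n (\<lambda>k. e ^ (2 * k)) = mat n n (\<lambda>(i,k). U $$ (i,k) * e ^ (2 * k))"
    by (rule mat_diag_mult_right[OF U(1)])
  then have "(U * mat_diag n (\<lambda>k. e ^ (2 * k)) * L) $$ (i,j)
      = (\<Sum>k<n. U $$ (i,k) * e ^ (2 * k) * L $$ (k,j))"
    using Lc i j by (simp add: scalar_prod_def atLeast0LessThan)
  then have "rescaled_UDL n U L e $$ (i,j) = (\<Sum>k<n. t k)"
    using i j
    by (simp add: rescaled_UDL_def t_def sum_distrib_left sum_divide_distrib algebra_simps)
  moreover have "(\<Sum>k<n. if k = i \<and> j = i then U $$ (i,i) * e ^ (2 * i) else 0)
      = (if i = j then U $$ (i,i) * e ^ (2 * i) else 0)"
    using i by (cases "i = j") auto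
  then have "(\<Sum>k<n. t k) - (if i = j then U $$ (i,i) * e ^ (2 * i) else 0) = (\<Sum>k<n. r k)"
    by (simp add: r_def sum_subtractf)
  moreover have "\<bar>r k\<bar> \<le> \<bar>U $$ (i,k) * L $$ (k,j)\<bar> * e ^ (2 * i + 1)" for k
  proof (cases "(k = i \<and> j = i) \<or> U $$ (i,k) * L $$ (k,j) = 0")
    case True
    then have "r k = 0" using L_diag e by (auto simp: r_def t_def)
    then show ?thesis using e(1) by simp
  next
    case False
    have "i \<le> k"
    proof (rule ccontr)
      assume "\<not> i \<le> k"
      then have "U $$ (i,k) = 0" using U i by (intro upper_triangularD) auto
      then show False using False by simp
    qed
    moreover have "j \<le> k"
      using False L_lower by (metis mult_zero_right not_le)
    ultimately
    have exp: "2 * i + 1 \<le> 2 * k + i - j"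
      using False by auto
    have "e ^ (2 * k) * e ^ i / e ^ j = e ^ (2 * k + i - j)"
      using \<open>j \<le> k\<close> e(1) by (simp add: power_add[symmetric] power_diff)
    also have "\<dots> \<le> e ^ (2 * i + 1)"
      using exp e by (intro power_decreasing) auto
    finally have scale: "e ^ (2 * k) * e ^ i / e ^ j \<le> e ^ (2 * i + 1)" .
    have "\<bar>r k\<bar> = \<bar>U $$ (i,k) * L $$ (k,j)\<bar> * (e ^ (2 * k) * e ^ i / e ^ j)"
      using False e(1) by (auto simp: r_def t_def abs_mult)
    also have "\<dots> \<le> \<bar>U $$ (i,k) * L $$ (k,j)\<bar> * e ^ (2 * i + 1)"
      by (rule mult_left_mono[OF scale]) simp
    finally show ?thesis .
  qed
  then have "\<bar>\<Sum>k<n. r k\<bar> \<le> (\<Sum>k<n. \<bar>U $$ (i,k) * L $$ (k,j)\<bar>) * e ^ (2 * i + 1)"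
    by (simp add: sum_distrib_right order_trans[OF sum_abs sum_mono])
  ultimately show ?thesis by simp
qed

lemma rescaled_UDL_hurwitz_stable:
  fixes L U :: "real mat"
  assumes L: "unit_lower_triangular n L" and U: "U \<in> carrier_mat n n" "upper_triangular U"
    and e: "0 < e" "e \<le> 1"
    and C: "\<And>i j. i < n \<Longrightarrow> j < n \<Longrightarrow> (\<Sum>k<n. \<bar>U $$ (i,k) * L $$ (k,j)\<bar>) \<le> C"
    and small: "\<And>i. i < n \<Longrightarrow> U $$ (i,i) + n * C * e < 0"
  shows "hurwitz_stable (rescaled_UDL n U L e)"
proof (rule hurwitz_stable_if_diag_dominant)
  let ?Y = "rescaled_UDL n U L e"
  have entry: "\<bar>?Y $$ (i,j) - (if i = j then U $$ (i,i) * e ^ (2 * i) else 0)\<bar> \<le> C * e ^ (2 * i + 1)"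
    if "i < n" "j < n" for i j
  proof -
    have "(\<Sum>k<n. \<bar>U $$ (i,k) * L $$ (k,j)\<bar>) * e ^ (2 * i + 1) \<le> C * e ^ (2 * i + 1)"
      using C[OF that] e(1) by (intro mult_right_mono) auto
    then show ?thesis by (rule order_trans[OF rescaled_UDL_entry_bound[OF L U e that]])
  qed
  fix i assume i: "i < n"
  have "?Y $$ (i,i) \<le> U $$ (i,i) * e ^ (2 * i) + C * e ^ (2 * i + 1)"
    using entry[OF i i] by simp
  moreover have "(\<Sum>j\<in>{0..<n}-{i}. \<bar>?Y $$ (i,j)\<bar>) \<le> (\<Sum>j\<in>{0..<n}-{i}. C * e ^ (2 * i + 1))"
  proof (rule sum_mono)
    fix j assume "j \<in> {0..<n}-{i}"
    then show "\<bar>?Y $$ (i,j)\<bar> \<le> C * e ^ (2 * i + 1)"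
      using entry[OF i, of j] by auto
  qed
  moreover have "(\<Sum>j\<in>{0..<n}-{i}. C * e ^ (2 * i + 1)) = (real n - 1) * (C * e ^ (2 * i + 1))"
    using i by (simp add: of_nat_diff)
  ultimately have "?Y $$ (i,i) + (\<Sum>j\<in>{0..<n}-{i}. \<bar>?Y $$ (i,j)\<bar>)
      \<le> e ^ (2 * i) * (U $$ (i,i) + n * C * e)"
    by (simp add: algebra_simps)
  also have "\<dots> < 0"
    using small[OF i] e(1) by (intro mult_pos_neg) auto
  finally show "?Y $$ (i,i) + (\<Sum>j\<in>{0..<n}-{i}. \<bar>?Y $$ (i,j)\<bar>) < 0" .
qed (simp add: rescaled_UDL_def)

lemma LU_diag_scaling_hurwitz_stable:
  fixes L U :: "real mat"
  assumes L: "unit_lower_triangular n L" and U: "U \<in> carrier_mat n n" "upper_triangular U"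
    and neg: "\<And>i. i < n \<Longrightarrow> U $$ (i,i) < 0"
  obtains e where "e > 0" "hurwitz_stable (L * U * mat_diag n (\<lambda>k. e ^ (2 * k)))"
proof -
  define C where "C = (\<Sum>i<n. \<Sum>j<n. \<Sum>k<n. \<bar>U $$ (i,k) * L $$ (k,j)\<bar>)"
  have C_ge: "(\<Sum>k<n. \<bar>U $$ (i,k) * L $$ (k,j)\<bar>) \<le> C" if "i < n" "j < n" for i j
  proof -
    have "(\<Sum>k<n. \<bar>U $$ (i,k) * L $$ (k,j)\<bar>) \<le> (\<Sum>j<n. \<Sum>k<n. \<bar>U $$ (i,k) * L $$ (k,j)\<bar>)"
      using that by (intro member_le_sum sum_nonneg) auto
    also have "\<dots> \<le> C"
      unfolding C_def using that by (intro member_le_sum sum_nonneg) auto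
    finally show ?thesis .
  qed
  have denom: "real n * C + 1 > 0"
    unfolding C_def by (simp add: add_nonneg_pos sum_nonneg)
  \<comment> \<open>the element 1 keeps the set nonempty when \<open>n = 0\<close>\<close>
  define u where "u = Min (insert 1 ((\<lambda>i. - U $$ (i,i)) ` {..<n}))"
  have u_pos: "u > 0" using neg by (auto simp: u_def)
  define e where "e = min 1 (u / (n * C + 1))"
  have e: "0 < e" "e \<le> 1" using u_pos denom by (auto simp: e_def)
  have "n * C * e \<le> n * C * (u / (n * C + 1))"
    using denom by (intro mult_left_mono) (auto simp: e_def C_def sum_nonneg)
  also have "\<dots> = u - u / (n * C + 1)"
    using denom by (simp add: field_simps)
  also have "\<dots> < u" using u_pos denom by simp
  finally have small: "n * C * e < u" .
  have "U $$ (i,i) + n * C * e < 0" if "i < n" for i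
  proof -
    have "u \<le> - U $$ (i,i)" using that by (simp add: u_def)
    then show ?thesis using small by simp
  qed
  then have "hurwitz_stable (rescaled_UDL n U L e)"
    using rescaled_UDL_hurwitz_stable[OF L U e C_ge] by blast
  moreover have "char_poly (L * U * mat_diag n (\<lambda>k. e ^ (2 * k))) = char_poly (rescaled_UDL n U L e)"
    using similar_rescaled_UDL[OF L U(1) e(1)] by (rule char_poly_similar)
  moreover have "L * U * mat_diag n (\<lambda>k. e ^ (2 * k)) \<in> carrier_mat n n"
    and "rescaled_UDL n U L e \<in> carrier_mat n n"
    using L U by (auto simp: unit_lower_triangular_def rescaled_UDL_def intro!: mult_carrier_mat)
  ultimately show ?thesis
    using that e(1) hurwitz_stable_char_poly_eq by blast
qed

section \<open>The Fisher--Fuller theorem\<close>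

lemma det_leading_sub_permute:
  fixes B :: "real mat"
  assumes B: "B \<in> carrier_mat m m" and S: "S \<subseteq> {0..<m}" and p: "bij_betw p {0..<k} S"
  shows "det (leading_sub (mat m m (\<lambda>(i,j). B $$ (p i, p j))) k) = det (principal_sub B S)"
proof -
  have card: "card S = k" using bij_betw_same_card[OF p] by simp
  then have "k \<le> m" using card_mono[OF _ S] by simp
  then have "leading_sub (mat m m (\<lambda>(i,j). B $$ (p i, p j))) k = mat k k (\<lambda>(i,j). B $$ (p i, p j))"
    by (intro eq_matI) (auto simp: leading_sub_def)
  moreover have "principal_sub B S = mat k k (\<lambda>(i,j). B $$ (pick S i, pick S j))"
    using principal_sub_pick[OF B S] card by simp
  moreover have "bij_betw (pick S) {0..<k} S"
    using bij_betw_pick[of S] card S finite_subset by blast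
  ultimately show ?thesis
    using det_reindex_bij[OF p, of _ "\<lambda>a b. B $$ (a,b)"] by simp
qed

lemma P_FF_minus_det_nonzero:
  assumes B: "B \<in> carrier_mat m m" and ff: "P_FF_minus B" and m: "0 < m"
  shows "det B \<noteq> 0"
proof -
  obtain c where "\<forall>k\<in>{1..m}. c k \<subseteq> {0..<m} \<and> card (c k) = k \<and> det (principal_sub B (c k)) \<noteq> 0"
    using ff B unfolding P_FF_minus_def by auto
  then have "c m \<subseteq> {0..<m}" "card (c m) = m" "det (principal_sub B (c m)) \<noteq> 0"
    using m by auto
  moreover from this have "c m = {0..<m}" by (simp add: card_subset_eq)
  ultimately show ?thesis using principal_sub_full[OF B] by simp
qed

lemma P_FF_minus_permuted_leading_minors:
  assumes B: "B \<in> carrier_mat m m" and ff: "P_FF_minus B"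
  obtains p where "p permutes {0..<m}"
    and "\<And>k. k \<in> {1..m} \<Longrightarrow> det (leading_sub (mat m m (\<lambda>(i,j). B $$ (p i, p j))) k) \<noteq> 0"
    and "\<And>k. k \<in> {1..m} \<Longrightarrow> sgn (det (leading_sub (mat m m (\<lambda>(i,j). B $$ (p i, p j))) k)) = (-1) ^ k"
proof -
  obtain c where
    c_all: "\<forall>k\<in>{1..m}. c k \<subseteq> {0..<m} \<and> card (c k) = k \<and> det (principal_sub B (c k)) \<noteq> 0"
    and nested_all: "\<forall>k\<in>{2..m}. c (k - 1) \<subseteq> c k"
    using ff B unfolding P_FF_minus_def by auto
  note c = bspec[OF c_all] and nested = bspec[OF nested_all]
  obtain p where p: "p permutes {0..<m}" and pc: "\<And>k. k \<in> {1..m} \<Longrightarrow> bij_betw p {0..<k} (c k)"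
    using nested_chain_permutation[of m c] c nested by blast
  have minors: "det (leading_sub (mat m m (\<lambda>(i,j). B $$ (p i, p j))) k) = det (principal_sub B (c k))"
    if "k \<in> {1..m}" for k
    using det_leading_sub_permute[OF B _ pc[OF that]] c[OF that] by blast
  have "sgn (det (principal_sub B (c k))) = (-1) ^ k" if "k \<in> {1..m}" for k
  proof -
    have "c k \<noteq> {}" using c[OF that] that by auto
    then show ?thesis using ff B c[OF that] unfolding P_FF_minus_def P0_minus_def by auto
  qed
  then show ?thesis
    using that[OF p] minors c by simp
qed

lemma hurwitz_stable_unpermute_diag:
  assumes B: "B \<in> carrier_mat m m" and p: "p permutes {0..<m}"
    and stable: "hurwitz_stable (mat m m (\<lambda>(i,j). B $$ (p i, p j)) * mat_diag m d)"
  shows "hurwitz_stable (B * mat_diag m (\<lambda>i. d (Hilbert_Choice.inv p i)))"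
proof -
  let ?D = "mat_diag m (\<lambda>i. d (Hilbert_Choice.inv p i))"
  let ?Bpd = "mat m m (\<lambda>(i,j). B $$ (p i, p j)) * mat_diag m d"
  have BD: "B * ?D \<in> carrier_mat m m" using B by simp
  have "mat m m (\<lambda>(i,j). (B * ?D) $$ (p i, p j)) = ?Bpd"
    using B permutes_lessThan_less[OF p]
    by (auto intro!: eq_matI simp: mat_diag_mult_right[of _ m m] permutes_inverses(2)[OF p])
  then have "char_poly (B * ?D) = char_poly ?Bpd"
    using char_poly_permute_rows_cols[OF BD p] by metis
  moreover have "?Bpd \<in> carrier_mat m m"
    by (auto intro!: mult_carrier_mat)
  ultimately show ?thesis
    using stable hurwitz_stable_char_poly_eq[OF BD] by blast
qed

theorem P_FF_minus_diag_stabilizable: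
  assumes B: "B \<in> carrier_mat m m" and ff: "P_FF_minus B"
  obtains D where "pos_diag m D" "hurwitz_stable (B * D)"
proof -
  obtain p where p: "p permutes {0..<m}"
    and minors: "\<And>k. k \<in> {1..m} \<Longrightarrow> det (leading_sub (mat m m (\<lambda>(i,j). B $$ (p i, p j))) k) \<noteq> 0"
    and sign: "\<And>k. k \<in> {1..m} \<Longrightarrow> sgn (det (leading_sub (mat m m (\<lambda>(i,j). B $$ (p i, p j))) k)) = (-1) ^ k"
    using P_FF_minus_permuted_leading_minors[OF B ff] by blast
  obtain L U where LU: "unit_lower_triangular m L" "U \<in> carrier_mat m m" "upper_triangular U"
    and Bp: "mat m m (\<lambda>(i,j). B $$ (p i, p j)) = L * U"
    using LU_factorization[of "mat m m (\<lambda>(i,j). B $$ (p i, p j))" m] minors by auto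
  have "U $$ (i,i) < 0" if "i < m" for i
    using LU_diag_neg[OF LU _ that] sign by (simp add: Bp)
  then obtain e where e: "e > 0" "hurwitz_stable (L * U * mat_diag m (\<lambda>k. e ^ (2 * k)))"
    using LU_diag_scaling_hurwitz_stable[OF LU] by blast
  let ?D = "mat_diag m (\<lambda>i. e ^ (2 * Hilbert_Choice.inv p i))"
  have "hurwitz_stable (B * ?D)"
    using hurwitz_stable_unpermute_diag[OF B p] e(2) Bp by simp
  moreover have "pos_diag m ?D"
    using e(1) by (simp add: pos_diag_def diagonal_mat_def mat_diag_def)
  ultimately show ?thesis using that by blast
qed

lemma hurwitz_unstable_iff_inertia:
  assumes A: "A \<in> carrier_mat n n"
  shows "hurwitz_unstable A \<longleftrightarrow> fst (snd (inertia A)) \<noteq> 0"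
proof -
  let ?A = "map_mat complex_of_real A"
  have A': "?A \<in> carrier_mat n n" using A by simp
  have "char_poly ?A \<noteq> 0"
    using degree_monic_char_poly[OF A'] by auto
  then have "z \<in># eigs A \<longleftrightarrow> eigenvalue ?A z" for z
    unfolding eigs_def eigenvalue_root_char_poly[OF A'] by simp
  then show ?thesis
    by (auto simp: hurwitz_unstable_def inertia_def filter_mset_eq_mempty_iff)
qed

lemma principal_sub_carrier:
  assumes "A \<in> carrier_mat n n" and "\<kappa> \<subseteq> {0..<n}"
  shows "principal_sub A \<kappa> \<in> carrier_mat (card \<kappa>) (card \<kappa>)"
proof -
  have "{i. i < n \<and> i \<in> \<kappa>} = \<kappa>" using assms(2) by auto
  then show ?thesis using assms(1) by (simp add: principal_sub_def submatrix_def)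
qed

lemma hurwitz_unstable_dim_pos:
  assumes "B \<in> carrier_mat m m" and "hurwitz_unstable B"
  shows "0 < m"
proof (rule ccontr)
  assume "\<not> 0 < m"
  then have "map_mat complex_of_real B \<in> carrier_mat 0 0" using assms(1) by simp
  then show False
    using assms(2) by (auto simp: hurwitz_unstable_def eigenvalue_det)
qed

lemma inertia_ne_if_unstable_stable:
  assumes "B1 \<in> carrier_mat m m" "B2 \<in> carrier_mat m m"
    and "hurwitz_unstable B1" and "hurwitz_stable B2"
  shows "inertia B1 \<noteq> inertia B2"
proof -
  have "\<not> hurwitz_unstable B2"
    using assms(4) by (force simp: hurwitz_stable_def hurwitz_unstable_def)
  then show ?thesis
    using assms hurwitz_unstable_iff_inertia by metis
qed

theorem mainTheorem6:
  fixes A :: "real mat" and n :: nat and \<kappa> :: "nat set"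
  assumes "A \<in> carrier_mat n n"
    and "\<kappa> \<subseteq> {0..<n}"
    and "P_FF_minus (principal_sub A \<kappa>)"
    and "hurwitz_unstable (principal_sub A \<kappa>)"
  shows "D_Hopf A"
proof -
  define B m where "B = principal_sub A \<kappa>" and "m = card \<kappa>"
  have B: "B \<in> carrier_mat m m"
    unfolding B_def m_def using principal_sub_carrier[OF assms(1,2)] .
  have "0 < m"
    using hurwitz_unstable_dim_pos[OF B] assms(4) by (simp add: B_def)
  then have "\<kappa> \<noteq> {}" and "det B \<noteq> 0"
    using P_FF_minus_det_nonzero[OF B] assms(3) by (auto simp: m_def B_def)
  obtain D where D: "pos_diag m D" "hurwitz_stable (B * D)"
    using P_FF_minus_diag_stabilizable[OF B] assms(3) B_def by blast
  have "B * D \<in> carrier_mat m m" using B D(1) by (auto simp: pos_diag_def)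
  then have "inertia (B * 1\<^sub>m m) \<noteq> inertia (B * D)"
    using inertia_ne_if_unstable_stable[OF B _ _ D(2)] assms(4) B by (simp add: B_def)
  moreover have "pos_diag m (1\<^sub>m m)"
    by (simp add: pos_diag_def diagonal_mat_def)
  moreover have "\<kappa> \<subseteq> {0..<dim_row A}" using assms(1,2) by simp
  ultimately show ?thesis
    unfolding D_Hopf_def B_def m_def
    using \<open>\<kappa> \<noteq> {}\<close> \<open>det B \<noteq> 0\<close>[unfolded B_def] D(1)[unfolded m_def] by blast
qed

end
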